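(* Let $X=C_1\cup C_2$ be the Alexandroff double circle. Then $X$ is a compact Hausdorff first-countable space, $C_1\in\mathsf{K}(X)$, but the Smyth power space $P_S(X)$ is not first-countable; in fact $C_1$ has no countable neighborhood base in $P_S(X)$.
   Context: In $\mathbb R^2$ let $C_i=\{(x,y): x^2+y^2=i\}$ for $i=1,2$, $X=C_1\cup C_2$, and let $p:C_1\to C_2$ be the radial projection from the origin. Topologize $X$ by neighborhood bases: for $z\in C_2$ the base is $\{\{z\}\}$; for $z\in C_1$ the base is $\{U_j(z): j\in\mathbb N\}$ with $U_j(z)=V_j\cup p(V_j\setminus\{z\})$, where $V_j$ is the arc of $C_1$ centered at $z$ of length $1/j$. $\mathsf{K}(X)$ is the set of nonempty compact saturated subsets of $X$ (for a $T_1$ space, all nonempty compact subsets). For open $U$, $\Box U=\{K\in\mathsf{K}(X):K\subseteq U\}$; the Smyth power space $P_S(X)$ is $\mathsf{K}(X)$ with the topology having base $\{\Box U: U\text{ open}\}$. *)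

theory Defs
  imports "HOL-Analysis.Analysis"
begin

text \<open>The plane R^2 is represented by the complex numbers.
  C_i = {(x,y). x^2 + y^2 = i}, i = 1, 2.\<close>

definition C1 :: "complex set" where
  "C1 = {z. (Re z)^2 + (Im z)^2 = 1}"

definition C2 :: "complex set" where
  "C2 = {z. (Re z)^2 + (Im z)^2 = 2}"

definition dcX :: "complex set" where
  "dcX = C1 \<union> C2"

definition proj :: "complex \<Rightarrow> complex" where
  "proj z = complex_of_real (sqrt 2) * z"

text \<open>V j z: the (open) arc of C_1 centred at z of length 1/j, i.e. the points of C_1
  whose angular distance from z is less than 1/(2j).\<close>
definition arcV :: "nat \<Rightarrow> complex \<Rightarrow> complex set" where
  "arcV j z = {w \<in> C1. \<bar>Arg (w / z)\<bar> < 1 / (2 * real j)}"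

definition nbhdU :: "nat \<Rightarrow> complex \<Rightarrow> complex set" where
  "nbhdU j z = arcV j z \<union> proj ` (arcV j z - {z})"

text \<open>Open sets of the topology given by the neighbourhood bases:
  {{z}} for z in C_2, and {U_j(z) : j \<ge> 1} for z in C_1.\<close>
definition dc_open :: "complex set \<Rightarrow> bool" where
  "dc_open S \<longleftrightarrow> S \<subseteq> dcX \<and>
     (\<forall>z\<in>S. (z \<in> C2 \<and> {z} \<subseteq> S) \<or> (z \<in> C1 \<and> (\<exists>j\<ge>1. nbhdU j z \<subseteq> S)))"

lemma arcV_mono: "j \<le> k \<Longrightarrow> 1 \<le> j \<Longrightarrow> arcV k z \<subseteq> arcV j z"
proof
  fix w assume jk: "j \<le> k" "1 \<le> j" and w: "w \<in> arcV k z"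
  have "1 / (2 * real k) \<le> 1 / (2 * real j)"
    using jk by (intro divide_left_mono) auto
  with w show "w \<in> arcV j z" unfolding arcV_def by auto
qed

lemma nbhdU_mono: "j \<le> k \<Longrightarrow> 1 \<le> j \<Longrightarrow> nbhdU k z \<subseteq> nbhdU j z"
  using arcV_mono[of j k z] unfolding nbhdU_def by blast

lemma istopology_dc_open: "istopology dc_open"
  unfolding istopology_def
proof (intro conjI allI impI ballI)
  fix S T assume S: "dc_open S" and T: "dc_open T"
  show "dc_open (S \<inter> T)"
    unfolding dc_open_def
  proof (intro conjI ballI)
    show "S \<inter> T \<subseteq> dcX" using S unfolding dc_open_def by blast
  next
    fix z assume z: "z \<in> S \<inter> T"
    show "(z \<in> C2 \<and> {z} \<subseteq> S \<inter> T) \<or> (z \<in> C1 \<and> (\<exists>j\<ge>1. nbhdU j z \<subseteq> S \<inter> T))"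
    proof (cases "z \<in> C2")
      case True then show ?thesis using z by blast
    next
      case False
      then obtain j k where j: "j \<ge> 1" "nbhdU j z \<subseteq> S" and k: "k \<ge> 1" "nbhdU k z \<subseteq> T"
        and zc: "z \<in> C1"
        using S T z unfolding dc_open_def by blast
      have "nbhdU (max j k) z \<subseteq> S \<inter> T"
        using nbhdU_mono[of j "max j k" z] nbhdU_mono[of k "max j k" z] j k by auto
      then show ?thesis using zc j by (intro disjI2) (auto intro!: exI[of _ "max j k"])
    qed
  qed
next
  fix K assume K: "\<forall>S\<in>K. dc_open S"
  show "dc_open (\<Union>K)"
    unfolding dc_open_def
  proof (intro conjI ballI)
    show "\<Union>K \<subseteq> dcX" using K unfolding dc_open_def by blast
  next
    fix z assume "z \<in> \<Union>K"
    then obtain S where S: "S \<in> K" "z \<in> S" by blast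
    then have "(z \<in> C2 \<and> {z} \<subseteq> S) \<or> (z \<in> C1 \<and> (\<exists>j\<ge>1. nbhdU j z \<subseteq> S))"
      using K unfolding dc_open_def by blast
    moreover have "S \<subseteq> \<Union>K" using S by blast
    ultimately show "(z \<in> C2 \<and> {z} \<subseteq> \<Union>K) \<or> (z \<in> C1 \<and> (\<exists>j\<ge>1. nbhdU j z \<subseteq> \<Union>K))"
      by (meson order_trans)
  qed
qed

definition double_circle :: "complex topology" where
  "double_circle = topology dc_open"

definition saturated_in :: "'a topology \<Rightarrow> 'a set \<Rightarrow> bool" where
  "saturated_in T K \<longleftrightarrow> K = topspace T \<inter> \<Inter>{U. openin T U \<and> K \<subseteq> U}"

definition KX :: "'a topology \<Rightarrow> 'a set set" where
  "KX T = {K. K \<subseteq> topspace T \<and> K \<noteq> {} \<and> compactin T K \<and> saturated_in T K}"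

definition box :: "'a topology \<Rightarrow> 'a set \<Rightarrow> 'a set set" where
  "box T U = {K \<in> KX T. K \<subseteq> U}"

definition smyth :: "'a topology \<Rightarrow> 'a set topology" where
  "smyth T = topology_generated_by {box T U | U. openin T U}"

definition countable_nbhd_base_at :: "'a topology \<Rightarrow> 'a \<Rightarrow> bool" where
  "countable_nbhd_base_at T x \<longleftrightarrow>
     (\<exists>B. countable B \<and> (\<forall>N\<in>B. N \<subseteq> topspace T \<and> x \<in> T interior_of N) \<and>
          (\<forall>U. openin T U \<and> x \<in> U \<longrightarrow> (\<exists>N\<in>B. N \<subseteq> U)))"

end

theory Submission
  imports Defs
begin

text \<open>The identity from the Euclidean circle C1 to the double circle is continuous, so C1 is
  compact there. Every open W \<supseteq> C1 contains, around each t \<in> C1, a Euclidean disc whose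
  radial projection minus proj t lies in W; finitely many discs cover C1, so W misses only finitely
  many points of C2. As C2 is uncountable, countably many open W \<supseteq> C1 have a common point
  q \<in> C2. Every \<box>W then contains {q}, so none of them lies in the Smyth neighbourhood
  \<box>(X - {q}) of C1, and C1 has no countable neighbourhood base.\<close>

section \<open>General topology and the Smyth power space\<close>

lemma saturated_in_t1_space:
  assumes "t1_space X" "S \<subseteq> topspace X"
  shows "saturated_in X S"
  unfolding saturated_in_def
proof
  show "S \<subseteq> topspace X \<inter> \<Inter>{U. openin X U \<and> S \<subseteq> U}"
    using assms(2) by blast
  show "topspace X \<inter> \<Inter>{U. openin X U \<and> S \<subseteq> U} \<subseteq> S"
  proof
    fix y assume y: "y \<in> topspace X \<inter> \<Inter>{U. openin X U \<and> S \<subseteq> U}"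
    show "y \<in> S"
    proof (rule ccontr)
      assume "y \<notin> S"
      then have "openin X (topspace X - {y}) \<and> S \<subseteq> topspace X - {y}"
        using assms y closedin_t1_singleton[of X y] by (auto simp: closedin_def)
      with y show False by blast
    qed
  qed
qed

lemma KX_t1_space_iff: "t1_space X \<Longrightarrow> K \<in> KX X \<longleftrightarrow> K \<noteq> {} \<and> compactin X K"
  using saturated_in_t1_space[of X K] compactin_subset_topspace[of X K] by (auto simp: KX_def)

lemma compact_space_if_compactin_cofinite_nbhds:
  assumes "compactin X K"
    and cofinite: "\<And>W. openin X W \<Longrightarrow> K \<subseteq> W \<Longrightarrow> finite (topspace X - W)"
  shows "compact_space X"
  unfolding compact_space_def compactin_def
proof (intro conjI allI impI)
  fix \<U> assume \<U>: "(\<forall>U\<in>\<U>. openin X U) \<and> topspace X \<subseteq> \<Union>\<U>"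
  moreover have "K \<subseteq> topspace X"
    using assms(1) by (rule compactin_subset_topspace)
  ultimately obtain \<F> where \<F>: "finite \<F>" "\<F> \<subseteq> \<U>" "K \<subseteq> \<Union>\<F>"
    using assms(1) unfolding compactin_def by (meson order_trans)
  have "finite (topspace X - \<Union>\<F>)"
    using \<F> \<U> by (intro cofinite) auto
  then have "compactin X (topspace X - \<Union>\<F>)"
    by (intro finite_imp_compactin) auto
  then obtain \<G> where \<G>: "finite \<G>" "\<G> \<subseteq> \<U>" "topspace X - \<Union>\<F> \<subseteq> \<Union>\<G>"
    using \<U> unfolding compactin_def by (meson Diff_subset order_trans)
  show "\<exists>\<H>. finite \<H> \<and> \<H> \<subseteq> \<U> \<and> topspace X \<subseteq> \<Union>\<H>"
    using \<F> \<G> by (intro exI[of _ "\<F> \<union> \<G>"]) auto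
qed simp

lemma topspace_smyth: "topspace (smyth X) = KX X"
proof -
  have "box X (topspace X) = KX X"
    by (auto simp: box_def KX_def)
  moreover have "box X U \<subseteq> box X (topspace X)" if "openin X U" for U
    using openin_subset[OF that] by (auto simp: box_def)
  ultimately show ?thesis
    unfolding smyth_def topology_generated_by_topspace by blast
qed

lemma openin_smyth_box: "openin X U \<Longrightarrow> openin (smyth X) (box X U)"
  unfolding smyth_def by (rule topology_generated_by_Basis) blast

lemma openin_smyth_contains_box:
  assumes "openin (smyth X) Q" "K \<in> Q"
  obtains W where "openin X W" "K \<subseteq> W" "box X W \<subseteq> Q"
proof -
  have "generate_topology_on {box X U | U. openin X U} Q"
    using assms(1) unfolding smyth_def openin_topology_generated_by_iff .
  then have "K \<in> Q \<longrightarrow> (\<exists>W. openin X W \<and> K \<subseteq> W \<and> box X W \<subseteq> Q)"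
  proof (induction rule: generate_topology_on.induct)
    case Empty
    show ?case by simp
  next
    case (Int a b)
    show ?case
    proof
      assume "K \<in> a \<inter> b"
      then obtain W1 W2 where "openin X W1" "K \<subseteq> W1" "box X W1 \<subseteq> a"
        and "openin X W2" "K \<subseteq> W2" "box X W2 \<subseteq> b"
        using Int.IH by blast
      moreover have "box X (W1 \<inter> W2) \<subseteq> box X W1 \<inter> box X W2"
        by (auto simp: box_def)
      ultimately show "\<exists>W. openin X W \<and> K \<subseteq> W \<and> box X W \<subseteq> a \<inter> b"
        by (intro exI[of _ "W1 \<inter> W2"]) (blast intro: openin_Int)
    qed
  next
    case (UN \<K>)
    show ?case
    proof
      assume "K \<in> \<Union>\<K>"
      then obtain k where "k \<in> \<K>" "K \<in> k" by blast
      then obtain W where "openin X W" "K \<subseteq> W" "box X W \<subseteq> k"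
        using UN.IH by blast
      with \<open>k \<in> \<K>\<close> show "\<exists>W. openin X W \<and> K \<subseteq> W \<and> box X W \<subseteq> \<Union>\<K>" by blast
    qed
  next
    case (Basis s)
    then obtain U where "s = box X U" "openin X U" by blast
    then show ?case by (auto simp: box_def intro!: exI[of _ U])
  qed
  with assms(2) that show thesis by blast
qed

lemma countable_nbhd_base_at_first_countable:
  assumes "first_countable X" "x \<in> topspace X"
  shows "countable_nbhd_base_at X x"
proof -
  obtain \<B> where "countable \<B>" and \<B>_open: "\<forall>V\<in>\<B>. openin X V"
    and \<B>_base: "\<forall>U. openin X U \<and> x \<in> U \<longrightarrow> (\<exists>V\<in>\<B>. x \<in> V \<and> V \<subseteq> U)"
    using bspec[OF assms(1)[unfolded first_countable_def] assms(2)] by blast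
  show ?thesis
    unfolding countable_nbhd_base_at_def
  proof (intro exI[of _ "{V \<in> \<B>. x \<in> V}"] conjI ballI allI impI)
    show "countable {V \<in> \<B>. x \<in> V}"
      using \<open>countable \<B>\<close> by simp
    fix V assume "V \<in> {V \<in> \<B>. x \<in> V}"
    then show "V \<subseteq> topspace X" "x \<in> X interior_of V"
      using \<B>_open by (auto simp: openin_subset interior_of_openin)
  next
    fix U assume "openin X U \<and> x \<in> U"
    then show "\<exists>V\<in>{V \<in> \<B>. x \<in> V}. V \<subseteq> U"
      using \<B>_base by blast
  qed
qed

lemma smyth_not_countable_nbhd_base_at:
  assumes "t1_space X" "K \<in> KX X" "S \<subseteq> topspace X - K" "uncountable S"
    and countable_miss: "\<And>W. openin X W \<Longrightarrow> K \<subseteq> W \<Longrightarrow> countable (S - W)"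
  shows "\<not> countable_nbhd_base_at (smyth X) K"
proof
  assume "countable_nbhd_base_at (smyth X) K"
  then obtain \<B> where "countable \<B>"
    and \<B>_nbhd: "\<forall>N\<in>\<B>. K \<in> smyth X interior_of N"
    and \<B>_base: "\<forall>Q. openin (smyth X) Q \<and> K \<in> Q \<longrightarrow> (\<exists>N\<in>\<B>. N \<subseteq> Q)"
    unfolding countable_nbhd_base_at_def by auto
  have "\<exists>W. openin X W \<and> K \<subseteq> W \<and> box X W \<subseteq> N" if "N \<in> \<B>" for N
  proof -
    have "K \<in> smyth X interior_of N"
      using \<B>_nbhd that by blast
    then obtain Q where "openin (smyth X) Q" "K \<in> Q" "Q \<subseteq> N"
      by (auto simp: interior_of_def)
    obtain W where "openin X W" "K \<subseteq> W" "box X W \<subseteq> Q"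
      using \<open>openin (smyth X) Q\<close> \<open>K \<in> Q\<close> by (rule openin_smyth_contains_box)
    with \<open>Q \<subseteq> N\<close> show ?thesis by blast
  qed
  then obtain W where W: "\<And>N. N \<in> \<B> \<Longrightarrow> openin X (W N) \<and> K \<subseteq> W N \<and> box X (W N) \<subseteq> N"
    by metis
  have "countable (S - W N)" if "N \<in> \<B>" for N
    using W[OF that] by (intro countable_miss) auto
  then have "countable (\<Union>N\<in>\<B>. S - W N)"
    by (rule countable_UN[OF \<open>countable \<B>\<close>])
  then have "\<not> S \<subseteq> (\<Union>N\<in>\<B>. S - W N)"
    using \<open>uncountable S\<close> countable_subset by blast
  then obtain q where q: "q \<in> S" "\<And>N. N \<in> \<B> \<Longrightarrow> q \<in> W N"
    by blast
  have "q \<in> topspace X" "q \<notin> K"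
    using assms(3) q(1) by auto
  then have "openin X (topspace X - {q})"
    using closedin_t1_singleton[OF assms(1)] by (simp add: closedin_def)
  then have "openin (smyth X) (box X (topspace X - {q}))"
    by (rule openin_smyth_box)
  moreover have "K \<in> box X (topspace X - {q})"
    using assms(2) \<open>q \<notin> K\<close> by (auto simp: box_def KX_def)
  ultimately have "\<exists>N\<in>\<B>. N \<subseteq> box X (topspace X - {q})"
    using \<B>_base by simp
  then obtain N where N: "N \<in> \<B>" "N \<subseteq> box X (topspace X - {q})"
    by blast
  have "{q} \<in> KX X"
    using \<open>q \<in> topspace X\<close> assms(1) by (simp add: KX_t1_space_iff finite_imp_compactin)
  then have "{q} \<in> box X (W N)"
    using q(2)[OF N(1)] by (simp add: box_def)
  with W[OF N(1)] N(2) show False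
    by (auto simp: box_def)
qed

section \<open>The two circles\<close>

lemma C1_iff: "z \<in> C1 \<longleftrightarrow> cmod z = 1"
  by (auto simp: C1_def cmod_def)

lemma C2_iff: "z \<in> C2 \<longleftrightarrow> cmod z = sqrt 2"
  by (auto simp: C2_def cmod_def)

lemma C1_Int_C2: "C1 \<inter> C2 = {}"
  by (auto simp: C1_iff C2_iff)

lemma proj_in_C2: "z \<in> C1 \<Longrightarrow> proj z \<in> C2"
  by (auto simp: C1_iff C2_iff proj_def norm_mult)

lemma inj_proj: "inj proj"
  by (auto simp: inj_def proj_def)

lemma C2_eq_proj_image: "C2 = proj ` C1"
proof
  show "C2 \<subseteq> proj ` C1"
  proof
    fix c assume "c \<in> C2"
    then have "c / complex_of_real (sqrt 2) \<in> C1" "c = proj (c / complex_of_real (sqrt 2))"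
      by (auto simp: C1_iff C2_iff proj_def norm_divide)
    then show "c \<in> proj ` C1" by blast
  qed
qed (use proj_in_C2 in blast)

lemma uncountable_C2: "uncountable C2"
proof -
  have "C2 = sphere 0 (sqrt 2)"
    by (auto simp: C2_iff)
  moreover have "connected (sphere (0::complex) (sqrt 2))"
    by (rule connected_sphere) simp
  moreover have "complex_of_real (sqrt 2) \<in> sphere 0 (sqrt 2)"
    "- complex_of_real (sqrt 2) \<in> sphere 0 (sqrt 2)"
    "complex_of_real (sqrt 2) \<noteq> - complex_of_real (sqrt 2)"
    by auto
  ultimately show ?thesis
    using connected_uncountable by metis
qed

lemma compact_C1: "compact C1"
proof -
  have "C1 = sphere 0 1"
    by (auto simp: C1_iff)
  then show ?thesis
    using compact_sphere by metis
qed

lemma arcV_subset_C1: "arcV j z \<subseteq> C1"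
  by (auto simp: arcV_def)

lemma centre_in_arcV: "z \<in> C1 \<Longrightarrow> 1 \<le> j \<Longrightarrow> z \<in> arcV j z"
  by (auto simp: arcV_def C1_iff)

lemma dist_C1_eq_cis_Arg:
  assumes "w \<in> C1" "z \<in> C1"
  shows "dist w z = cmod (cis (Arg (w / z)) - 1)"
proof -
  have "z \<noteq> 0" "w / z \<noteq> 0" "cmod (w / z) = 1"
    using assms by (auto simp: C1_iff norm_divide)
  then have "cis (Arg (w / z)) = w / z"
    using cis_Arg by (simp add: sgn_div_norm)
  moreover have "w - z = z * (w / z - 1)"
    using \<open>z \<noteq> 0\<close> by (simp add: field_simps)
  ultimately show ?thesis
    using assms(2) by (simp add: dist_norm norm_mult C1_iff)
qed

lemma arcV_subset_ball:
  assumes "z \<in> C1" "r > 0"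
  obtains k where "k \<ge> 1" "arcV k z \<subseteq> ball z r"
proof -
  have "isCont cis 0"
    using continuous_on_cis[OF continuous_on_id, of UNIV]
    by (simp add: continuous_on_eq_continuous_at)
  then obtain d where "d > 0" and d: "\<And>t. dist t 0 < d \<Longrightarrow> dist (cis t) 1 < r"
    using assms(2) unfolding continuous_at_eps_delta by fastforce
  obtain n where n: "inverse (real (Suc n)) < d"
    using reals_Archimedean \<open>d > 0\<close> by blast
  have "1 / (2 * real (Suc n)) < d"
    using n by (simp add: field_simps)
  have "arcV (Suc n) z \<subseteq> ball z r"
  proof
    fix w assume "w \<in> arcV (Suc n) z"
    then have "w \<in> C1" "dist (Arg (w / z)) 0 < d"
      using \<open>1 / (2 * real (Suc n)) < d\<close> by (auto simp: arcV_def)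
    then have "dist w z < r"
      using d dist_C1_eq_cis_Arg[OF _ assms(1)] by (simp add: dist_norm)
    then show "w \<in> ball z r"
      by (simp add: dist_commute)
  qed
  then show thesis
    using that[of "Suc n"] by simp
qed

text \<open>The bound 1/(2j) \<le> 1/2 < \<pi> keeps w/z off the branch cut of Arg.\<close>
lemma C1_ball_subset_arcV:
  assumes z: "z \<in> C1" and w: "w \<in> arcV j z" and j: "j \<ge> 1"
  obtains r where "r > 0" "C1 \<inter> ball w r \<subseteq> arcV j z"
proof -
  define \<theta> where "\<theta> = Arg (w / z)"
  have "w \<in> C1" and \<theta>: "\<bar>\<theta>\<bar> < 1 / (2 * real j)"
    using w by (auto simp: arcV_def \<theta>_def)
  have "1 / (2 * real j) \<le> 1 / 2"
    using j by (simp add: divide_simps)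
  have "w / z \<noteq> 0"
    using \<open>w \<in> C1\<close> z by (auto simp: C1_iff)
  have "w / z \<notin> \<real>\<^sub>\<le>\<^sub>0"
  proof
    assume "w / z \<in> \<real>\<^sub>\<le>\<^sub>0"
    then have "Re (w / z) < 0 \<and> Im (w / z) = 0"
      using \<open>w / z \<noteq> 0\<close> complex_nonpos_Reals_iff
      by (metis complex_eq_iff order_le_less zero_complex.simps)
    then have "\<theta> = pi"
      using Arg_eq_pi \<theta>_def by blast
    with \<theta> \<open>1 / (2 * real j) \<le> 1 / 2\<close> pi_gt3 show False
      by linarith
  qed
  then have "isCont (\<lambda>v. Arg (v / z)) w"
    using z by (auto simp: C1_iff intro!: isCont_o2[OF _ continuous_at_Arg] continuous_intros)
  moreover have "1 / (2 * real j) - \<bar>\<theta>\<bar> > 0"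
    using \<theta> by simp
  ultimately obtain r where "r > 0"
    and r: "\<And>v. dist v w < r \<Longrightarrow> dist (Arg (v / z)) \<theta> < 1 / (2 * real j) - \<bar>\<theta>\<bar>"
    unfolding continuous_at_eps_delta \<theta>_def by blast
  have "C1 \<inter> ball w r \<subseteq> arcV j z"
    using r by (fastforce simp: arcV_def dist_real_def dist_commute)
  with \<open>r > 0\<close> that show thesis by blast
qed

section \<open>The double circle topology\<close>

lemma openin_double_circle: "openin double_circle = dc_open"
  unfolding double_circle_def by (rule topology_inverse'[OF istopology_dc_open])

lemma nbhdU_subset_dcX: "nbhdU j z \<subseteq> dcX"
  using arcV_subset_C1 proj_in_C2 by (fastforce simp: nbhdU_def dcX_def)

lemma centre_in_nbhdU: "z \<in> C1 \<Longrightarrow> 1 \<le> j \<Longrightarrow> z \<in> nbhdU j z"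
  by (simp add: nbhdU_def centre_in_arcV)

lemma topspace_double_circle: "topspace double_circle = dcX"
proof -
  have "dc_open dcX"
    using nbhdU_subset_dcX by (auto simp: dc_open_def dcX_def)
  then show ?thesis
    unfolding topspace_def openin_double_circle by (auto simp: dc_open_def)
qed

lemma openin_singleton_C2: "q \<in> C2 \<Longrightarrow> openin double_circle {q}"
  by (auto simp: openin_double_circle dc_open_def dcX_def)

lemma openin_nbhdU:
  assumes z: "z \<in> C1" and j: "j \<ge> 1"
  shows "openin double_circle (nbhdU j z)"
  unfolding openin_double_circle dc_open_def
proof (intro conjI ballI)
  show "nbhdU j z \<subseteq> dcX"
    by (rule nbhdU_subset_dcX)
next
  fix w assume w: "w \<in> nbhdU j z"
  show "(w \<in> C2 \<and> {w} \<subseteq> nbhdU j z) \<or> (w \<in> C1 \<and> (\<exists>k\<ge>1. nbhdU k w \<subseteq> nbhdU j z))"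
  proof (cases "w \<in> arcV j z")
    case False
    then show ?thesis
      using w proj_in_C2 arcV_subset_C1 unfolding nbhdU_def by blast
  next
    case True
    then have "w \<in> C1"
      using arcV_subset_C1 by blast
    show ?thesis
    proof (cases "w = z")
      case False
      obtain r where "r > 0" and r: "C1 \<inter> ball w r \<subseteq> arcV j z"
        using C1_ball_subset_arcV[OF z True j] .
      then obtain k where "k \<ge> 1" and k: "arcV k w \<subseteq> ball w (min r (dist w z))"
        using arcV_subset_ball[OF \<open>w \<in> C1\<close>, of "min r (dist w z)"] False by auto
      have "ball w (min r (dist w z)) \<subseteq> ball w r" "z \<notin> ball w (min r (dist w z))"
        by auto
      then have "arcV k w \<subseteq> arcV j z" "z \<notin> arcV k w"
        using k r arcV_subset_C1[of k w] by blast+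
      then have "nbhdU k w \<subseteq> nbhdU j z"
        unfolding nbhdU_def by blast
      then show ?thesis
        using \<open>w \<in> C1\<close> \<open>k \<ge> 1\<close> by blast
    qed (use j \<open>w \<in> C1\<close> in blast)
  qed
qed

lemma openin_dcX_minus_C2:
  assumes "q \<in> C2"
  shows "openin double_circle (dcX - {q})"
  unfolding openin_double_circle dc_open_def
proof (intro conjI ballI)
  fix w assume w: "w \<in> dcX - {q}"
  obtain z where "z \<in> C1" "q = proj z"
    using assms C2_eq_proj_image by blast
  show "(w \<in> C2 \<and> {w} \<subseteq> dcX - {q}) \<or> (w \<in> C1 \<and> (\<exists>k\<ge>1. nbhdU k w \<subseteq> dcX - {q}))"
  proof (cases "w \<in> C2")
    case False
    then have "w \<in> C1"
      using w by (auto simp: dcX_def)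
    have "\<exists>k\<ge>1. z \<notin> arcV k w \<or> z = w"
    proof (cases "w = z")
      case False
      then obtain k where "k \<ge> 1" "arcV k w \<subseteq> ball w (dist w z)"
        using arcV_subset_ball[OF \<open>w \<in> C1\<close>, of "dist w z"] by auto
      then show ?thesis by auto
    qed auto
    then obtain k where "k \<ge> 1" "z \<notin> arcV k w \<or> z = w"
      by blast
    then have "q \<notin> nbhdU k w"
      using \<open>q = proj z\<close> assms arcV_subset_C1 C1_Int_C2 inj_proj
      unfolding nbhdU_def by (auto dest: injD)
    then show ?thesis
      using \<open>w \<in> C1\<close> \<open>k \<ge> 1\<close> nbhdU_subset_dcX by blast
  qed (use w in blast)
qed blast

lemma openin_double_circle_C1_ball:
  assumes "openin double_circle W" "z \<in> C1" "z \<in> W"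
  obtains r where "r > 0" "C1 \<inter> ball z r \<subseteq> W" "proj ` (C1 \<inter> ball z r - {z}) \<subseteq> W"
proof -
  obtain j where "j \<ge> 1" "nbhdU j z \<subseteq> W"
    using assms C1_Int_C2 unfolding openin_double_circle dc_open_def by blast
  moreover obtain r where "r > 0" "C1 \<inter> ball z r \<subseteq> arcV j z"
    using C1_ball_subset_arcV[OF assms(2) centre_in_arcV[OF assms(2)]] \<open>j \<ge> 1\<close> by metis
  ultimately show thesis
    using that unfolding nbhdU_def by blast
qed

lemma continuous_map_C1_double_circle: "continuous_map (top_of_set C1) double_circle id"
  unfolding continuous_map_openin_preimage_eq
proof (intro conjI allI impI)
  show "id \<in> topspace (top_of_set C1) \<rightarrow> topspace double_circle"
    by (auto simp: topspace_double_circle dcX_def)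
next
  fix W assume W: "openin double_circle W"
  show "openin (top_of_set C1) (topspace (top_of_set C1) \<inter> id -` W)"
    unfolding openin_euclidean_subtopology_iff
  proof (intro conjI ballI)
    fix z assume "z \<in> topspace (top_of_set C1) \<inter> id -` W"
    then have "z \<in> C1" "z \<in> W"
      by auto
    then obtain r where "r > 0" "C1 \<inter> ball z r \<subseteq> W"
      by (rule openin_double_circle_C1_ball[OF W])
    then show "\<exists>e>0. \<forall>x'\<in>C1. dist x' z < e \<longrightarrow> x' \<in> topspace (top_of_set C1) \<inter> id -` W"
      by (intro exI[of _ r]) (auto simp: dist_commute)
  qed auto
qed

lemma compactin_C1: "compactin double_circle C1"
proof -
  have "compactin (top_of_set C1) C1"
    using compact_C1 by (simp add: compactin_subtopology)
  from image_compactin[OF this continuous_map_C1_double_circle] show ?thesis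
    by simp
qed

lemma finite_C2_minus_nbhd_C1:
  assumes W: "openin double_circle W" and "C1 \<subseteq> W"
  shows "finite (C2 - W)"
proof -
  have "\<exists>r>0. proj ` (C1 \<inter> ball z r - {z}) \<subseteq> W" if "z \<in> C1" for z
  proof -
    have "z \<in> W"
      using that \<open>C1 \<subseteq> W\<close> by blast
    obtain r where "r > 0" "C1 \<inter> ball z r \<subseteq> W" "proj ` (C1 \<inter> ball z r - {z}) \<subseteq> W"
      by (rule openin_double_circle_C1_ball[OF W \<open>z \<in> C1\<close> \<open>z \<in> W\<close>])
    then show ?thesis
      by blast
  qed
  then have "\<forall>z\<in>C1. \<exists>r. r > 0 \<and> proj ` (C1 \<inter> ball z r - {z}) \<subseteq> W"
    by blast
  from bchoice[OF this] obtain R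
    where R: "\<forall>z\<in>C1. R z > 0 \<and> proj ` (C1 \<inter> ball z (R z) - {z}) \<subseteq> W"
    by blast
  have "C1 \<subseteq> (\<Union>z\<in>C1. ball z (R z))"
  proof
    fix z assume "z \<in> C1"
    then have "z \<in> ball z (R z)"
      using R by simp
    with \<open>z \<in> C1\<close> show "z \<in> (\<Union>z\<in>C1. ball z (R z))"
      by blast
  qed
  then obtain T where T: "T \<subseteq> C1" "finite T" "C1 \<subseteq> (\<Union>t\<in>T. ball t (R t))"
    by (rule compactE_image[OF compact_C1 open_ball])
  have "C2 - W \<subseteq> proj ` T"
  proof
    fix c assume c: "c \<in> C2 - W"
    then obtain w where "w \<in> C1" "c = proj w"
      using C2_eq_proj_image by blast
    then obtain t where "t \<in> T" "w \<in> ball t (R t)"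
      using T(3) by blast
    have "w = t"
    proof (rule ccontr)
      assume "w \<noteq> t"
      then have "proj w \<in> W"
        using R \<open>t \<in> T\<close> T(1) \<open>w \<in> C1\<close> \<open>w \<in> ball t (R t)\<close> by blast
      with c \<open>c = proj w\<close> show False
        by blast
    qed
    with \<open>t \<in> T\<close> \<open>c = proj w\<close> show "c \<in> proj ` T"
      by blast
  qed
  then show ?thesis
    using T(2) by (meson finite_imageI finite_subset)
qed

lemma compact_space_double_circle: "compact_space double_circle"
proof (rule compact_space_if_compactin_cofinite_nbhds[OF compactin_C1])
  fix W assume "openin double_circle W" "C1 \<subseteq> W"
  then have "finite (C2 - W)"
    by (rule finite_C2_minus_nbhd_C1)
  moreover have "topspace double_circle - W \<subseteq> C2 - W"
    using \<open>C1 \<subseteq> W\<close> by (auto simp: topspace_double_circle dcX_def)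
  ultimately show "finite (topspace double_circle - W)"
    by (meson finite_subset)
qed

lemma separate_C2_point:
  assumes "x \<in> C2" "y \<in> dcX" "x \<noteq> y"
  shows "\<exists>U V. openin double_circle U \<and> openin double_circle V \<and> x \<in> U \<and> y \<in> V \<and> disjnt U V"
  using assms openin_singleton_C2[OF assms(1)] openin_dcX_minus_C2[OF assms(1)]
  by (intro exI[of _ "{x}"] exI[of _ "dcX - {x}"]) (auto simp: disjnt_def)

lemma separate_C1_points:
  assumes "x \<in> C1" "y \<in> C1" "x \<noteq> y"
  shows "\<exists>U V. openin double_circle U \<and> openin double_circle V \<and> x \<in> U \<and> y \<in> V \<and> disjnt U V"
proof -
  define r where "r = dist x y / 2"
  have "r > 0"
    using assms(3) by (simp add: r_def)
  obtain k1 where "k1 \<ge> 1" "arcV k1 x \<subseteq> ball x r"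
    using arcV_subset_ball[OF assms(1) \<open>r > 0\<close>] .
  obtain k2 where "k2 \<ge> 1" "arcV k2 y \<subseteq> ball y r"
    using arcV_subset_ball[OF assms(2) \<open>r > 0\<close>] .
  define k where "k = max k1 k2"
  have "k \<ge> 1" "arcV k x \<subseteq> ball x r" "arcV k y \<subseteq> ball y r"
    using \<open>k1 \<ge> 1\<close> \<open>k2 \<ge> 1\<close> \<open>arcV k1 x \<subseteq> ball x r\<close> \<open>arcV k2 y \<subseteq> ball y r\<close>
      arcV_mono[of k1 k x] arcV_mono[of k2 k y]
    by (auto simp: k_def)
  moreover have "ball x r \<inter> ball y r = {}"
  proof -
    have False if "dist x v < r" "dist y v < r" for v
      using that dist_triangle[of x y v] dist_commute[of v y] unfolding r_def by linarith
    then show ?thesis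
      by auto
  qed
  ultimately have "arcV k x \<inter> arcV k y = {}"
    by blast
  then have "disjnt (nbhdU k x) (nbhdU k y)"
    using injD[OF inj_proj] proj_in_C2 C1_Int_C2 arcV_subset_C1[of k x] arcV_subset_C1[of k y]
    unfolding disjnt_def nbhdU_def by blast
  then show ?thesis
    using openin_nbhdU[OF assms(1) \<open>k \<ge> 1\<close>] openin_nbhdU[OF assms(2) \<open>k \<ge> 1\<close>]
      centre_in_nbhdU[OF assms(1) \<open>k \<ge> 1\<close>] centre_in_nbhdU[OF assms(2) \<open>k \<ge> 1\<close>]
    by blast
qed

lemma Hausdorff_space_double_circle: "Hausdorff_space double_circle"
  unfolding Hausdorff_space_def topspace_double_circle
proof (intro allI impI)
  fix x y assume xy: "x \<in> dcX \<and> y \<in> dcX \<and> x \<noteq> y"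
  show "\<exists>U V. openin double_circle U \<and> openin double_circle V \<and> x \<in> U \<and> y \<in> V \<and> disjnt U V"
  proof (cases "x \<in> C2 \<or> y \<in> C2")
    case True
    then show ?thesis
      using xy separate_C2_point[of x y] separate_C2_point[of y x]
      by (metis disjnt_sym)
  next
    case False
    with xy show ?thesis
      by (intro separate_C1_points) (auto simp: dcX_def)
  qed
qed

lemma first_countable_double_circle: "first_countable double_circle"
  unfolding first_countable_def topspace_double_circle
proof
  fix x assume x: "x \<in> dcX"
  show "\<exists>\<B>. countable \<B> \<and> (\<forall>V\<in>\<B>. openin double_circle V) \<and>
    (\<forall>U. openin double_circle U \<and> x \<in> U \<longrightarrow> (\<exists>V\<in>\<B>. x \<in> V \<and> V \<subseteq> U))"
  proof (cases "x \<in> C2")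
    case True
    then show ?thesis
      using openin_singleton_C2 by (intro exI[of _ "{{x}}"]) auto
  next
    case False
    then have "x \<in> C1"
      using x by (auto simp: dcX_def)
    show ?thesis
    proof (intro exI[of _ "range (\<lambda>j. nbhdU (Suc j) x)"] conjI ballI allI impI)
      fix V assume "V \<in> range (\<lambda>j. nbhdU (Suc j) x)"
      then show "openin double_circle V"
        using openin_nbhdU[OF \<open>x \<in> C1\<close>] by auto
    next
      fix U assume "openin double_circle U \<and> x \<in> U"
      then obtain j where "j \<ge> 1" "nbhdU j x \<subseteq> U"
        using False unfolding openin_double_circle dc_open_def by blast
      moreover have "nbhdU j x = nbhdU (Suc (j - 1)) x"
        using \<open>j \<ge> 1\<close> by simp
      ultimately show "\<exists>V\<in>range (\<lambda>j. nbhdU (Suc j) x). x \<in> V \<and> V \<subseteq> U"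
        using centre_in_nbhdU[OF \<open>x \<in> C1\<close> \<open>j \<ge> 1\<close>] by (metis rangeI)
    qed simp
  qed
qed

theorem mainTheorem4:
  shows "compact_space double_circle \<and> Hausdorff_space double_circle \<and>
         first_countable double_circle \<and> C1 \<in> KX double_circle \<and>
         \<not> first_countable (smyth double_circle) \<and>
         \<not> countable_nbhd_base_at (smyth double_circle) C1"
proof -
  have t1: "t1_space double_circle"
    using Hausdorff_space_double_circle by (rule Hausdorff_imp_t1_space)
  have "C1 \<noteq> {}"
    using C1_iff[of 1] by auto
  then have C1_KX: "C1 \<in> KX double_circle"
    using t1 compactin_C1 by (simp add: KX_t1_space_iff)
  have no_base: "\<not> countable_nbhd_base_at (smyth double_circle) C1"
  proof (rule smyth_not_countable_nbhd_base_at[OF t1 C1_KX _ uncountable_C2])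
    show "C2 \<subseteq> topspace double_circle - C1"
      using C1_Int_C2 by (auto simp: topspace_double_circle dcX_def)
  qed (simp add: finite_C2_minus_nbhd_C1 countable_finite)
  then have "\<not> first_countable (smyth double_circle)"
    using countable_nbhd_base_at_first_countable C1_KX by (metis topspace_smyth)
  with no_base C1_KX show ?thesis
    using compact_space_double_circle Hausdorff_space_double_circle
      first_countable_double_circle by blast
qed

end
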